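(* Let $T$ be a finite tree, $G=T^2$, and $\Bbbk$ a field. If $I(G)$ has a linear resolution, then $\mathrm{diam}(T)\le4$.
   Context: $T^2$ is the graph on $V(T)$ with edges the pairs at distance 1 or 2 in $T$. $I(G)=\langle x_ux_v:\{u,v\}\in E(G)\rangle\subseteq\Bbbk[x_v:v\in V(G)]$; it has a linear resolution if $\beta_{i,j}(I(G))=0$ for $j\ne i+2$. $\mathrm{diam}(T)$ is the maximum distance between two vertices of $T$. *)

theory Defs
  imports Main "HOL-Library.Poly_Mapping"
begin

definition simple_graph :: "'v set \<Rightarrow> ('v \<Rightarrow> 'v \<Rightarrow> bool) \<Rightarrow> bool" where
  "simple_graph V E \<longleftrightarrow> (\<forall>u v. E u v \<longrightarrow> u \<in> V \<and> v \<in> V \<and> u \<noteq> v \<and> E v u)"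

definition walk :: "'v set \<Rightarrow> ('v \<Rightarrow> 'v \<Rightarrow> bool) \<Rightarrow> 'v list \<Rightarrow> bool" where
  "walk V E p \<longleftrightarrow> p \<noteq> [] \<and> set p \<subseteq> V \<and> (\<forall>i. Suc i < length p \<longrightarrow> E (p ! i) (p ! Suc i))"

definition connected_graph :: "'v set \<Rightarrow> ('v \<Rightarrow> 'v \<Rightarrow> bool) \<Rightarrow> bool" where
  "connected_graph V E \<longleftrightarrow>
     (\<forall>u\<in>V. \<forall>v\<in>V. \<exists>p. walk V E p \<and> hd p = u \<and> last p = v)"

definition is_cycle :: "'v set \<Rightarrow> ('v \<Rightarrow> 'v \<Rightarrow> bool) \<Rightarrow> 'v list \<Rightarrow> bool" where
  "is_cycle V E c \<longleftrightarrow> walk V E c \<and> distinct c \<and> length c \<ge> 3 \<and> E (last c) (hd c)"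

definition tree :: "'v set \<Rightarrow> ('v \<Rightarrow> 'v \<Rightarrow> bool) \<Rightarrow> bool" where
  "tree V E \<longleftrightarrow> finite V \<and> V \<noteq> {} \<and> simple_graph V E \<and> connected_graph V E
     \<and> \<not> (\<exists>c. is_cycle V E c)"

definition dist :: "'v set \<Rightarrow> ('v \<Rightarrow> 'v \<Rightarrow> bool) \<Rightarrow> 'v \<Rightarrow> 'v \<Rightarrow> nat" where
  "dist V E u v = (LEAST n. \<exists>p. walk V E p \<and> hd p = u \<and> last p = v \<and> length p = Suc n)"

definition diam :: "'v set \<Rightarrow> ('v \<Rightarrow> 'v \<Rightarrow> bool) \<Rightarrow> nat" where
  "diam V E = Max {dist V E u v | u v. u \<in> V \<and> v \<in> V}"

definition graph_square :: "'v set \<Rightarrow> ('v \<Rightarrow> 'v \<Rightarrow> bool) \<Rightarrow> 'v \<Rightarrow> 'v \<Rightarrow> bool" where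
  "graph_square V E u v \<longleftrightarrow> u \<in> V \<and> v \<in> V \<and> u \<noteq> v \<and>
     (dist V E u v = 1 \<or> dist V E u v = 2)"

type_synonym ('v, 'k) mpoly = "('v \<Rightarrow>\<^sub>0 nat) \<Rightarrow>\<^sub>0 'k"

definition Var :: "'v \<Rightarrow> ('v, 'k::field) mpoly" where
  "Var v = Poly_Mapping.single (Poly_Mapping.single v 1) 1"

definition mdeg :: "('v \<Rightarrow>\<^sub>0 nat) \<Rightarrow> nat" where
  "mdeg m = (\<Sum>v\<in>Poly_Mapping.keys m. Poly_Mapping.lookup m v)"

definition polys_in :: "'v set \<Rightarrow> ('v, 'k::field) mpoly set" where
  "polys_in V = {p. \<forall>m\<in>Poly_Mapping.keys p. Poly_Mapping.keys m \<subseteq> V}"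

definition homogeneous :: "nat \<Rightarrow> ('v, 'k::field) mpoly \<Rightarrow> bool" where
  "homogeneous d p \<longleftrightarrow> (\<forall>m\<in>Poly_Mapping.keys p. mdeg m = d)"

definition ideal_gen :: "'v set \<Rightarrow> ('v, 'k::field) mpoly set \<Rightarrow> ('v, 'k) mpoly set" where
  "ideal_gen V S = {(\<Sum>i<(n::nat). c i * s i) | n c s. \<forall>i<n. c i \<in> polys_in V \<and> s i \<in> S}"

definition edge_ideal :: "'v set \<Rightarrow> ('v \<Rightarrow> 'v \<Rightarrow> bool) \<Rightarrow> ('v, 'k::field) mpoly set" where
  "edge_ideal V G = ideal_gen V {Var u * Var v | u v. u \<in> V \<and> v \<in> V \<and> G u v}"

definition free_mod :: "'v set \<Rightarrow> nat \<Rightarrow> (nat \<Rightarrow> ('v, 'k::field) mpoly) set" where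
  "free_mod V b = {x. (\<forall>j<b. x j \<in> polys_in V) \<and> (\<forall>j\<ge>b. x j = 0)}"

definition mat_apply :: "(nat \<Rightarrow> nat \<Rightarrow> ('v, 'k::field) mpoly) \<Rightarrow> nat
     \<Rightarrow> (nat \<Rightarrow> ('v, 'k) mpoly) \<Rightarrow> nat \<Rightarrow> ('v, 'k) mpoly" where
  "mat_apply M b x = (\<lambda>i. \<Sum>j<b. M i j * x j)"

text \<open>A graded free resolution
   0 <- I <-d0- F_0 <-d1- F_1 <- ... <- F_n <- 0  with  F_i = S(-i-2)^(b i):
  d0 sends the j-th basis vector to the homogeneous quadric g j, and d_k (k >= 1) is the
  b(k-1) x b(k) matrix M k whose entries are homogeneous linear forms (degree-0 graded maps).
  Such a resolution exists iff beta_{i,j}(I) = 0 for j <> i+2, i.e. iff I has a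
  linear resolution (a resolution of this form is automatically minimal).\<close>
definition has_linear_resolution :: "'v set \<Rightarrow> ('v, 'k::field) mpoly set \<Rightarrow> bool" where
  "has_linear_resolution V I \<longleftrightarrow>
    (\<exists>(b :: nat \<Rightarrow> nat) (g :: nat \<Rightarrow> ('v, 'k) mpoly)
        (M :: nat \<Rightarrow> nat \<Rightarrow> nat \<Rightarrow> ('v, 'k) mpoly) (n :: nat).
       (\<forall>k>n. b k = 0) \<and>
       (\<forall>j<b 0. g j \<in> polys_in V \<and> homogeneous 2 (g j)) \<and>
       ideal_gen V {g j | j. j < b 0} = I \<and>
       (\<forall>k\<ge>1. \<forall>i j. (i < b (k - 1) \<and> j < b k \<longrightarrow> M k i j \<in> polys_in V \<and> homogeneous 1 (M k i j))
                    \<and> (\<not> (i < b (k - 1) \<and> j < b k) \<longrightarrow> M k i j = 0)) \<and>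
       {x \<in> free_mod V (b 0). (\<Sum>j<b 0. x j * g j) = 0}
          = mat_apply (M 1) (b 1) ` free_mod V (b 1) \<and>
       (\<forall>k\<ge>1. {x \<in> free_mod V (b k). mat_apply (M k) (b k) x = (\<lambda>_. 0)}
          = mat_apply (M (Suc k)) (b (Suc k)) ` free_mod V (b (Suc k))))"

end

theory Submission
  imports Defs
begin

(* If diam T >= 5, the end edges v0 v1 and v(n-1) vn of a shortest path v0 ... vn (n >= 5) are
   edges of T^2 with no edge of T^2 between them, since their endpoints are at distance >= 3
   in T: they form a gap.  A gap {ab, cd} in G rules out a linear resolution of I(G).  Writing
   A = x_a x_b and C = x_c x_d as combinations of the quadric generators g_j, the Koszul
   syzygy C alpha - A gamma would have to be a combination of linear syzygies.  Weighting the
   x_c x_d-coefficient of the j-th component by the x_a x_b-coefficient of g_j gives a linear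
   functional that is 1 on the Koszul syzygy but vanishes on every linear syzygy: for w in
   {c, d} the monomial x_w x_a x_b can only arise there as x_w times the term x_a x_b of a
   generator, since w is adjacent to neither a nor b. *)

section \<open>Monomials and coefficients\<close>

abbreviation var_exp :: "'v \<Rightarrow> ('v \<Rightarrow>\<^sub>0 nat)" where
  "var_exp v \<equiv> Poly_Mapping.single v 1"

lemma Var_mult_Var: "(Var u * Var w :: ('v, 'k::field) mpoly) = Poly_Mapping.single (var_exp u + var_exp w) 1"
  by (simp add: Var_def mult_single)

lemma mdeg_eq_sum_superset:
  assumes "finite A" "Poly_Mapping.keys m \<subseteq> A"
  shows "mdeg m = (\<Sum>v\<in>A. Poly_Mapping.lookup m v)"
  unfolding mdeg_def
  by (rule sum.mono_neutral_left) (use assms in \<open>auto simp: in_keys_iff\<close>)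

lemma mdeg_add: "mdeg (s + t) = mdeg s + mdeg t"
proof -
  let ?A = "Poly_Mapping.keys s \<union> Poly_Mapping.keys t"
  have "mdeg (s + t) = (\<Sum>v\<in>?A. Poly_Mapping.lookup (s + t) v)"
    by (rule mdeg_eq_sum_superset) (auto dest: keys_add[THEN subsetD])
  also have "\<dots> = (\<Sum>v\<in>?A. Poly_Mapping.lookup s v) + (\<Sum>v\<in>?A. Poly_Mapping.lookup t v)"
    by (simp add: lookup_add sum.distrib)
  also have "\<dots> = mdeg s + mdeg t"
    by (simp add: mdeg_eq_sum_superset[symmetric])
  finally show ?thesis .
qed

lemma mdeg_eq_0_iff: "mdeg s = 0 \<longleftrightarrow> s = 0"
  unfolding mdeg_def by (auto simp: in_keys_iff intro: poly_mapping_eqI)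

lemma mdeg_var_exp [simp]: "mdeg (var_exp v) = 1"
  by (simp add: mdeg_def)

lemma mdeg_eq_1_imp_var_exp:
  assumes "mdeg s = 1"
  obtains w where "s = var_exp w"
proof -
  obtain w where w: "w \<in> Poly_Mapping.keys s"
    using assms mdeg_eq_0_iff[of s] by fastforce
  have "mdeg s = Poly_Mapping.lookup s w + (\<Sum>v\<in>Poly_Mapping.keys s - {w}. Poly_Mapping.lookup s v)"
    unfolding mdeg_def using w by (simp add: sum.remove)
  moreover have "Poly_Mapping.lookup s w > 0"
    using w by (simp add: in_keys_iff)
  ultimately have "Poly_Mapping.lookup s w = 1"
    and "(\<Sum>v\<in>Poly_Mapping.keys s - {w}. Poly_Mapping.lookup s v) = 0"
    using assms by linarith+
  then have "s = var_exp w"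
    by (auto simp: poly_mapping_eq_iff fun_eq_iff lookup_single when_def in_keys_iff)
  then show thesis by (rule that)
qed

lemma homogeneous_summand_eq_0:
  assumes "homogeneous d f" "mdeg t = d" "q \<in> Poly_Mapping.keys f" "t = s + q"
  shows "s = 0"
  using assms by (simp add: homogeneous_def mdeg_add mdeg_eq_0_iff)

lemma var_exp_pair_eq_plus_cases:
  assumes "var_exp c + var_exp d = var_exp z + q"
  shows "(z = c \<and> q = var_exp d) \<or> (z = d \<and> q = var_exp c)"
proof -
  have "Poly_Mapping.lookup (var_exp c + var_exp d) z = Poly_Mapping.lookup (var_exp z + q) z"
    using assms by simp
  then have "z = c \<or> z = d"
    by (auto simp: lookup_add lookup_single when_def split: if_splits)
  then show ?thesis
    using assms by (metis add.commute add_left_cancel)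
qed

lemma var_exp_pair_ne_plus:
  assumes "a \<noteq> c" "a \<noteq> d"
  shows "var_exp c + var_exp d \<noteq> var_exp a + q"
proof
  assume "var_exp c + var_exp d = var_exp a + q"
  then have "Poly_Mapping.lookup (var_exp c + var_exp d) a = Poly_Mapping.lookup (var_exp a + q) a"
    by simp
  then show False
    using assms by (simp add: lookup_add lookup_single)
qed

lemma var_exp_triple_eq_cases:
  assumes "distinct [w, a, b]"
    and eq: "var_exp w + (var_exp a + var_exp b) = var_exp z + (var_exp u + var_exp u')"
    and "{u, u'} \<noteq> {w, a}" "{u, u'} \<noteq> {w, b}"
  shows "z = w \<and> var_exp u + var_exp u' = var_exp a + var_exp b"
proof -
  let ?cnt = "\<lambda>P. if P then 1 else (0::nat)"
  have "Poly_Mapping.lookup (var_exp w + (var_exp a + var_exp b)) x = ?cnt (x \<in> {w, a, b})" for x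
    using assms(1) by (auto simp: lookup_add lookup_single)
  moreover have "Poly_Mapping.lookup (var_exp z + (var_exp u + var_exp u')) x
      = ?cnt (z = x) + ?cnt (u = x) + ?cnt (u' = x)" for x
    by (simp only: lookup_add lookup_single when_def add.assoc)
  ultimately have cnt: "?cnt (z = x) + ?cnt (u = x) + ?cnt (u' = x) = ?cnt (x \<in> {w, a, b})" for x
    by (metis eq)
  have "z \<in> {w, a, b}" "u \<in> {w, a, b}" "u' \<in> {w, a, b}"
    using cnt[of z] cnt[of u] cnt[of u'] by (auto split: if_splits)
  moreover have "z \<noteq> u" "z \<noteq> u'" "u \<noteq> u'"
    using cnt[of z] cnt[of u] by (auto split: if_splits)
  ultimately have "z = w" "{u, u'} = {a, b}"
    using assms(3,4) by auto
  then show ?thesis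
    by (auto simp: doubleton_eq_iff add.commute)
qed

lemma lookup_mult_eq_sum_pairs:
  fixes f g :: "'a::monoid_add \<Rightarrow>\<^sub>0 'b::semiring_0"
  assumes "finite P"
    and "\<And>s q. s \<in> Poly_Mapping.keys f \<Longrightarrow> q \<in> Poly_Mapping.keys g \<Longrightarrow> t = s + q \<Longrightarrow> (s, q) \<in> P"
    and "\<And>s q. (s, q) \<in> P \<Longrightarrow> t = s + q"
  shows "Poly_Mapping.lookup (f * g) t = (\<Sum>(s, q)\<in>P. Poly_Mapping.lookup f s * Poly_Mapping.lookup g q)"
proof -
  let ?K = "Poly_Mapping.keys f \<times> Poly_Mapping.keys g"
  let ?c = "\<lambda>(s, q). Poly_Mapping.lookup f s * Poly_Mapping.lookup g q"
  have inner: "(\<Sum>q. Poly_Mapping.lookup g q when t = s + q)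
      = (\<Sum>q\<in>Poly_Mapping.keys g. Poly_Mapping.lookup g q when t = s + q)" for s
    by (rule Sum_any.expand_superset) (auto simp: in_keys_iff)
  have "Poly_Mapping.lookup (f * g) t
      = (\<Sum>s\<in>Poly_Mapping.keys f. Poly_Mapping.lookup f s
           * (\<Sum>q\<in>Poly_Mapping.keys g. Poly_Mapping.lookup g q when t = s + q))"
    unfolding lookup_mult inner by (rule Sum_any.expand_superset) (auto simp: in_keys_iff)
  also have "\<dots> = (\<Sum>(s, q)\<in>?K. ?c (s, q) when t = s + q)"
    by (simp add: sum_distrib_left sum.cartesian_product mult_when)
  also have "\<dots> = sum ?c {x \<in> ?K. case x of (s, q) \<Rightarrow> t = s + q}"
    by (simp add: sum.inter_filter when_def case_prod_beta)
  also have "\<dots> = sum ?c P"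
  proof (rule sum.mono_neutral_left)
    show "{x \<in> ?K. case x of (s, q) \<Rightarrow> t = s + q} \<subseteq> P"
      using assms(2) by auto
    show "\<forall>x\<in>P - {x \<in> ?K. case x of (s, q) \<Rightarrow> t = s + q}. ?c x = 0"
      using assms(3) by (auto simp: in_keys_iff)
  qed (rule assms(1))
  finally show ?thesis .
qed

lemma lookup_mult_eq_single_pair:
  fixes f g :: "'a::monoid_add \<Rightarrow>\<^sub>0 'b::semiring_0"
  assumes "\<And>s q. s \<in> Poly_Mapping.keys f \<Longrightarrow> q \<in> Poly_Mapping.keys g \<Longrightarrow> t = s + q \<Longrightarrow> s = s0 \<and> q = q0"
    and "t = s0 + q0"
  shows "Poly_Mapping.lookup (f * g) t = Poly_Mapping.lookup f s0 * Poly_Mapping.lookup g q0"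
proof -
  have "Poly_Mapping.lookup (f * g) t
      = (\<Sum>(s, q)\<in>{(s0, q0)}. Poly_Mapping.lookup f s * Poly_Mapping.lookup g q)"
    by (rule lookup_mult_eq_sum_pairs) (use assms in blast)+
  then show ?thesis by simp
qed

lemma lookup_mult_eq_two_pairs:
  fixes f g :: "'a::monoid_add \<Rightarrow>\<^sub>0 'b::semiring_0"
  assumes "\<And>s q. s \<in> Poly_Mapping.keys f \<Longrightarrow> q \<in> Poly_Mapping.keys g \<Longrightarrow> t = s + q
      \<Longrightarrow> (s = s0 \<and> q = q0) \<or> (s = s1 \<and> q = q1)"
    and "t = s0 + q0" "t = s1 + q1" "s0 \<noteq> s1"
  shows "Poly_Mapping.lookup (f * g) t
    = Poly_Mapping.lookup f s0 * Poly_Mapping.lookup g q0 + Poly_Mapping.lookup f s1 * Poly_Mapping.lookup g q1"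
proof -
  have "Poly_Mapping.lookup (f * g) t
      = (\<Sum>(s, q)\<in>{(s0, q0), (s1, q1)}. Poly_Mapping.lookup f s * Poly_Mapping.lookup g q)"
    by (rule lookup_mult_eq_sum_pairs) (use assms in blast)+
  then show ?thesis using assms(4) by simp
qed

lemma lookup_mult_homogeneous:
  fixes \<alpha> g :: "('v, 'k::field) mpoly"
  assumes "homogeneous d g" "mdeg t = d"
  shows "Poly_Mapping.lookup (\<alpha> * g) t = Poly_Mapping.lookup \<alpha> 0 * Poly_Mapping.lookup g t"
proof (rule lookup_mult_eq_single_pair)
  fix s q
  assume "q \<in> Poly_Mapping.keys g" "t = s + q"
  then show "s = 0 \<and> q = t"
    using homogeneous_summand_eq_0[OF assms] by simp
qed simp

lemma lookup_linear_mult_at_var_pair: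
  fixes m y :: "('v, 'k::field) mpoly"
  assumes "homogeneous 1 m" "c \<noteq> d"
  shows "Poly_Mapping.lookup (m * y) (var_exp c + var_exp d)
    = Poly_Mapping.lookup m (var_exp c) * Poly_Mapping.lookup y (var_exp d)
    + Poly_Mapping.lookup m (var_exp d) * Poly_Mapping.lookup y (var_exp c)"
proof (rule lookup_mult_eq_two_pairs)
  fix s q
  assume s: "s \<in> Poly_Mapping.keys m" and sum: "var_exp c + var_exp d = s + q"
  have "mdeg s = 1"
    using assms(1) s by (simp add: homogeneous_def)
  then obtain z where "s = var_exp z"
    by (rule mdeg_eq_1_imp_var_exp)
  then show "s = var_exp c \<and> q = var_exp d \<or> s = var_exp d \<and> q = var_exp c"
    using var_exp_pair_eq_plus_cases[of c d z q] sum by blast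
next
  show "var_exp c \<noteq> var_exp d"
    using assms(2) by (metis lookup_single_eq lookup_single_not_eq zero_neq_one)
qed (simp_all add: add.commute)

section \<open>Ideals and first syzygies\<close>

lemma polys_in_zero: "0 \<in> polys_in V"
  by (simp add: polys_in_def)

lemma polys_in_one: "1 \<in> polys_in V"
  by (simp add: polys_in_def)

lemma polys_in_Var: "v \<in> V \<Longrightarrow> (Var v :: ('v, 'k::field) mpoly) \<in> polys_in V"
  by (simp add: polys_in_def Var_def)

lemma polys_in_add: "p \<in> polys_in V \<Longrightarrow> q \<in> polys_in V \<Longrightarrow> p + q \<in> polys_in V"
  using keys_add[of p q] unfolding polys_in_def by blast

lemma polys_in_diff:
  "p \<in> polys_in V \<Longrightarrow> q \<in> polys_in V \<Longrightarrow> (p - q :: ('v, 'k::field) mpoly) \<in> polys_in V"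
  using keys_diff[of p q] unfolding polys_in_def by blast

lemma polys_in_mult:
  assumes "p \<in> polys_in V" "q \<in> polys_in V"
  shows "p * q \<in> polys_in V"
  unfolding polys_in_def
proof (intro CollectI ballI)
  fix m assume "m \<in> Poly_Mapping.keys (p * q)"
  then obtain s t where "m = s + t" "s \<in> Poly_Mapping.keys p" "t \<in> Poly_Mapping.keys q"
    using keys_mult by blast
  then show "Poly_Mapping.keys m \<subseteq> V"
    using assms keys_add[of s t] unfolding polys_in_def by blast
qed

lemma polys_in_sum: "(\<And>i. i \<in> S \<Longrightarrow> f i \<in> polys_in V) \<Longrightarrow> sum f S \<in> polys_in V"
  by (induction S rule: infinite_finite_induct) (auto intro: polys_in_add polys_in_zero)

lemma generator_in_ideal_gen: "s \<in> S \<Longrightarrow> s \<in> ideal_gen V S"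
  unfolding ideal_gen_def
  by (rule CollectI, rule exI[of _ 1], rule exI[of _ "\<lambda>_. 1"], rule exI[of _ "\<lambda>_. s"])
     (simp add: polys_in_one)

lemma ideal_gen_indexed_combination:
  assumes "p \<in> ideal_gen V {g j | j. j < (B::nat)}"
  obtains \<alpha> where "\<And>j. j < B \<Longrightarrow> \<alpha> j \<in> polys_in V" and "p = (\<Sum>j<B. \<alpha> j * g j)"
proof -
  from assms obtain n c s where p: "p = (\<Sum>i<(n::nat). c i * s i)"
    and cs: "\<forall>i<n. c i \<in> polys_in V \<and> s i \<in> {g j | j. j < B}"
    unfolding ideal_gen_def by blast
  then have "\<forall>i<n. \<exists>j. j < B \<and> s i = g j"
    by blast
  then obtain J where J: "\<And>i. i < n \<Longrightarrow> J i < B \<and> s i = g (J i)"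
    by metis
  define \<alpha> where "\<alpha> j = (\<Sum>i\<in>{i\<in>{..<n}. J i = j}. c i)" for j
  have "(\<Sum>j<B. \<alpha> j * g j) = (\<Sum>j<B. \<Sum>i\<in>{i\<in>{..<n}. J i = j}. c i * g (J i))"
    unfolding \<alpha>_def by (auto simp: sum_distrib_right intro!: sum.cong)
  also have "\<dots> = (\<Sum>i<n. c i * g (J i))"
    by (rule sum.group) (use J in auto)
  also have "\<dots> = p"
    unfolding p using J by (auto intro!: sum.cong)
  finally have "p = (\<Sum>j<B. \<alpha> j * g j)"
    by (rule sym)
  then show thesis
    by (rule that[rotated]) (use cs in \<open>auto simp: \<alpha>_def intro!: polys_in_sum\<close>)
qed

lemma koszul_syzygy:
  fixes g \<alpha> \<gamma> :: "nat \<Rightarrow> ('v, 'k::field) mpoly"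
  assumes "A \<in> polys_in V" "C \<in> polys_in V"
    and "\<And>j. j < B \<Longrightarrow> \<alpha> j \<in> polys_in V" "\<And>j. j < B \<Longrightarrow> \<gamma> j \<in> polys_in V"
    and "A = (\<Sum>j<B. \<alpha> j * g j)" "C = (\<Sum>j<B. \<gamma> j * g j)"
  shows "(\<lambda>j. if j < B then C * \<alpha> j - A * \<gamma> j else 0) \<in> free_mod V B"
    and "(\<Sum>j<B. (if j < B then C * \<alpha> j - A * \<gamma> j else 0) * g j) = 0"
proof -
  show "(\<lambda>j. if j < B then C * \<alpha> j - A * \<gamma> j else 0) \<in> free_mod V B"
    using assms(1-4) by (simp add: free_mod_def polys_in_diff polys_in_mult)
  have "(\<Sum>j<B. (if j < B then C * \<alpha> j - A * \<gamma> j else 0) * g j)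
      = (\<Sum>j<B. C * (\<alpha> j * g j) - A * (\<gamma> j * g j))"
    by (rule sum.cong[OF refl]) (simp add: left_diff_distrib mult.assoc)
  also have "\<dots> = C * A - A * C"
    by (simp add: assms(5,6) sum_subtractf sum_distrib_left)
  finally show "(\<Sum>j<B. (if j < B then C * \<alpha> j - A * \<gamma> j else 0) * g j) = 0"
    by (simp add: mult.commute)
qed

definition edge_supported :: "('v \<Rightarrow> 'v \<Rightarrow> bool) \<Rightarrow> ('v, 'k::field) mpoly \<Rightarrow> bool" where
  "edge_supported G f \<longleftrightarrow> (\<forall>t\<in>Poly_Mapping.keys f. \<exists>u w. G u w \<and> t = var_exp u + var_exp w)"

lemma edge_supported_if_quadric_in_edge_ideal:
  assumes "f \<in> edge_ideal V G" "homogeneous 2 f"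
  shows "edge_supported G f"
  unfolding edge_supported_def
proof
  fix t assume t: "t \<in> Poly_Mapping.keys f"
  from assms(1) obtain n c s where f: "f = (\<Sum>i<(n::nat). c i * s i)"
    and cs: "\<forall>i<n. s i \<in> {Var u * Var v | u v. u \<in> V \<and> v \<in> V \<and> G u v}"
    unfolding edge_ideal_def ideal_gen_def by blast
  obtain i where i: "i < n" "t \<in> Poly_Mapping.keys (c i * s i)"
    using t unfolding f in_keys_iff lookup_sum by (meson sum.not_neutral_contains_not_neutral lessThan_iff)
  obtain u w where "G u w" and s: "s i = Poly_Mapping.single (var_exp u + var_exp w) 1"
    using cs i(1) by (auto simp: Var_mult_Var)
  obtain r where "t = r + (var_exp u + var_exp w)"
    using i(2) keys_mult[of "c i" "s i"] unfolding s by auto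
  moreover have "mdeg t = 2"
    using assms(2) t by (simp add: homogeneous_def)
  ultimately have "mdeg r = 0"
    by (simp only: mdeg_add mdeg_var_exp)
  then have "t = var_exp u + var_exp w"
    using \<open>t = r + (var_exp u + var_exp w)\<close> by (simp add: mdeg_eq_0_iff)
  with \<open>G u w\<close> show "\<exists>u w. G u w \<and> t = var_exp u + var_exp w" by blast
qed

lemma linear_resolution_first_syzygies:
  fixes I :: "('v, 'k::field) mpoly set"
  assumes "has_linear_resolution V I"
  obtains B :: nat and g :: "nat \<Rightarrow> ('v, 'k) mpoly" and B1 :: nat and M :: "nat \<Rightarrow> nat \<Rightarrow> ('v, 'k) mpoly"
  where "\<And>j. j < B \<Longrightarrow> homogeneous 2 (g j)"
    and "ideal_gen V {g j | j. j < B} = I"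
    and "\<And>j l. j < B \<Longrightarrow> l < B1 \<Longrightarrow> homogeneous 1 (M j l)"
    and "\<And>l. l < B1 \<Longrightarrow> (\<Sum>j<B. M j l * g j) = 0"
    and "\<And>x. x \<in> free_mod V B \<Longrightarrow> (\<Sum>j<B. x j * g j) = 0 \<Longrightarrow> \<exists>y. \<forall>j. x j = (\<Sum>l<B1. M j l * y l)"
proof -
  obtain b g M n where H:
    "(\<forall>k>n. b k = 0) \<and>
     (\<forall>j<b 0. g j \<in> polys_in V \<and> homogeneous 2 (g j)) \<and>
     ideal_gen V {g j | j. j < b 0} = I \<and>
     (\<forall>k\<ge>1. \<forall>i j. (i < b (k - 1) \<and> j < b k \<longrightarrow> M k i j \<in> polys_in V \<and> homogeneous 1 (M k i j))
                  \<and> (\<not> (i < b (k - 1) \<and> j < b k) \<longrightarrow> M k i j = 0)) \<and>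
     {x \<in> free_mod V (b 0). (\<Sum>j<b 0. x j * g j) = 0}
        = mat_apply (M 1) (b 1) ` free_mod V (b 1) \<and>
     (\<forall>k\<ge>1. {x \<in> free_mod V (b k). mat_apply (M k) (b k) x = (\<lambda>_. 0)}
        = mat_apply (M (Suc k)) (b (Suc k)) ` free_mod V (b (Suc k)))"
    using assms unfolding has_linear_resolution_def by (elim exE) (erule that)
  have hom: "\<forall>j<b 0. g j \<in> polys_in V \<and> homogeneous 2 (g j)"
    using H by (elim conjE) assumption
  have gen: "ideal_gen V {g j | j. j < b 0} = I"
    using H by (elim conjE) assumption
  have lin: "\<forall>k\<ge>1. \<forall>i j. (i < b (k - 1) \<and> j < b k \<longrightarrow> M k i j \<in> polys_in V \<and> homogeneous 1 (M k i j))
                  \<and> (\<not> (i < b (k - 1) \<and> j < b k) \<longrightarrow> M k i j = 0)"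
    using H by (elim conjE) assumption
  have exact: "{x \<in> free_mod V (b 0). (\<Sum>j<b 0. x j * g j) = 0}
        = mat_apply (M 1) (b 1) ` free_mod V (b 1)"
    using H by (elim conjE) assumption
  show thesis
  proof (rule that)
    show "homogeneous 2 (g j)" if "j < b 0" for j
      using hom that by blast
    show "ideal_gen V {g j | j. j < b 0} = I"
      by (rule gen)
    show "homogeneous 1 (M 1 j l)" if "j < b 0" "l < b 1" for j l
      using lin that by simp
    show "(\<Sum>j<b 0. M 1 j l * g j) = 0" if "l < b 1" for l
    proof -
      define e where "e = (\<lambda>j. if j = l then (1::('v, 'k) mpoly) else 0)"
      have "e \<in> free_mod V (b 1)"
        using that by (auto simp: free_mod_def e_def polys_in_one polys_in_zero)
      then have "mat_apply (M 1) (b 1) e \<in> {x \<in> free_mod V (b 0). (\<Sum>j<b 0. x j * g j) = 0}"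
        unfolding exact by (rule imageI)
      moreover have "mat_apply (M 1) (b 1) e = (\<lambda>j. M 1 j l)"
        using that by (simp add: mat_apply_def e_def if_distrib cong: if_cong)
      ultimately show ?thesis
        by simp
    qed
    show "\<exists>y. \<forall>j. x j = (\<Sum>l<b 1. M 1 j l * y l)"
      if "x \<in> free_mod V (b 0)" "(\<Sum>j<b 0. x j * g j) = 0" for x
    proof -
      have "x \<in> mat_apply (M 1) (b 1) ` free_mod V (b 1)"
        using that unfolding exact[symmetric] by blast
      then obtain y where "x = mat_apply (M 1) (b 1) y"
        by blast
      then show ?thesis
        unfolding mat_apply_def by auto
    qed
  qed
qed

section \<open>A gap obstructs a linear resolution\<close>

definition is_gap :: "('v \<Rightarrow> 'v \<Rightarrow> bool) \<Rightarrow> 'v \<Rightarrow> 'v \<Rightarrow> 'v \<Rightarrow> 'v \<Rightarrow> bool" where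
  "is_gap G a b c d \<longleftrightarrow> distinct [a, b, c, d] \<and> G a b \<and> G c d \<and>
     (\<forall>x\<in>{a, b}. \<forall>y\<in>{c, d}. \<not> G x y \<and> \<not> G y x)"

lemma linear_syzygy_coeff_at_isolated_edge:
  fixes m g :: "nat \<Rightarrow> ('v, 'k::field) mpoly"
  assumes "distinct [w, a, b]"
    and "\<not> G w a" "\<not> G a w" "\<not> G w b" "\<not> G b w"
    and lin: "\<And>j. j < B \<Longrightarrow> homogeneous 1 (m j)"
    and supp: "\<And>j. j < B \<Longrightarrow> edge_supported G (g j)"
    and syz: "(\<Sum>j<B. m j * g j) = 0"
  shows "(\<Sum>j<B. Poly_Mapping.lookup (g j) (var_exp a + var_exp b)
      * Poly_Mapping.lookup (m j) (var_exp w)) = 0"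
proof -
  let ?ab = "var_exp a + var_exp b"
  have coeff: "Poly_Mapping.lookup (m j * g j) (var_exp w + ?ab)
      = Poly_Mapping.lookup (m j) (var_exp w) * Poly_Mapping.lookup (g j) ?ab" if j: "j < B" for j
  proof (rule lookup_mult_eq_single_pair)
    fix s q
    assume s: "s \<in> Poly_Mapping.keys (m j)" and q: "q \<in> Poly_Mapping.keys (g j)"
      and sq: "var_exp w + ?ab = s + q"
    have "mdeg s = 1"
      using lin[OF j] s by (simp add: homogeneous_def)
    then obtain z where z: "s = var_exp z"
      by (rule mdeg_eq_1_imp_var_exp)
    obtain u u' where "G u u'" and u: "q = var_exp u + var_exp u'"
      using supp[OF j] q unfolding edge_supported_def by blast
    then have "{u, u'} \<noteq> {w, a}" "{u, u'} \<noteq> {w, b}"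
      using assms(2-5) by (auto simp: doubleton_eq_iff)
    moreover have "var_exp w + ?ab = var_exp z + (var_exp u + var_exp u')"
      using sq z u by simp
    ultimately show "s = var_exp w \<and> q = ?ab"
      using var_exp_triple_eq_cases[OF assms(1)] z u by blast
  qed simp
  have "0 = Poly_Mapping.lookup (\<Sum>j<B. m j * g j) (var_exp w + ?ab)"
    using syz by simp
  also have "\<dots> = (\<Sum>j<B. Poly_Mapping.lookup (m j) (var_exp w) * Poly_Mapping.lookup (g j) ?ab)"
    unfolding lookup_sum by (rule sum.cong[OF refl]) (rule coeff, simp)
  finally show ?thesis
    by (simp add: mult.commute)
qed

lemma weighted_coeff_of_linear_image_eq_0:
  fixes M :: "nat \<Rightarrow> nat \<Rightarrow> ('v, 'k::field) mpoly"
  assumes "c \<noteq> d"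
    and lin: "\<And>j l. j < B \<Longrightarrow> l < B1 \<Longrightarrow> homogeneous 1 (M j l)"
    and col: "\<And>l w. l < B1 \<Longrightarrow> w \<in> {c, d}
        \<Longrightarrow> (\<Sum>j<B. p j * Poly_Mapping.lookup (M j l) (var_exp w)) = 0"
  shows "(\<Sum>j<B. p j * Poly_Mapping.lookup (\<Sum>l<B1. M j l * y l) (var_exp c + var_exp d)) = 0"
proof -
  let ?M = "\<lambda>w j l. Poly_Mapping.lookup (M j l) (var_exp w)"
  let ?y = "\<lambda>w l. Poly_Mapping.lookup (y l) (var_exp w)"
  have "(\<Sum>j<B. p j * Poly_Mapping.lookup (\<Sum>l<B1. M j l * y l) (var_exp c + var_exp d))
      = (\<Sum>j<B. \<Sum>l<B1. p j * ?M c j l * ?y d l + p j * ?M d j l * ?y c l)"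
  proof (rule sum.cong[OF refl])
    fix j assume "j \<in> {..<B}"
    then have "Poly_Mapping.lookup (\<Sum>l<B1. M j l * y l) (var_exp c + var_exp d)
        = (\<Sum>l<B1. ?M c j l * ?y d l + ?M d j l * ?y c l)"
      unfolding lookup_sum using lin assms(1) by (intro sum.cong refl lookup_linear_mult_at_var_pair) auto
    then show "p j * Poly_Mapping.lookup (\<Sum>l<B1. M j l * y l) (var_exp c + var_exp d)
        = (\<Sum>l<B1. p j * ?M c j l * ?y d l + p j * ?M d j l * ?y c l)"
      by (simp add: sum_distrib_left algebra_simps)
  qed
  also have "\<dots> = (\<Sum>l<B1. (\<Sum>j<B. p j * ?M c j l) * ?y d l + (\<Sum>j<B. p j * ?M d j l) * ?y c l)"
    by (subst sum.swap) (simp add: sum.distrib sum_distrib_right)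
  also have "\<dots> = 0"
    using col by simp
  finally show ?thesis .
qed

lemma koszul_syzygy_weighted_coeff:
  fixes g \<alpha> \<gamma> :: "nat \<Rightarrow> ('v, 'k::field) mpoly"
  assumes "a \<noteq> c" "a \<noteq> d"
    and hom: "\<And>j. j < B \<Longrightarrow> homogeneous 2 (g j)"
    and rep: "Var a * Var b = (\<Sum>j<B. \<alpha> j * g j)"
  shows "(\<Sum>j<B. Poly_Mapping.lookup (g j) (var_exp a + var_exp b)
      * Poly_Mapping.lookup (Var c * Var d * \<alpha> j - Var a * Var b * \<gamma> j) (var_exp c + var_exp d)) = 1"
proof -
  let ?ab = "var_exp a + var_exp b" and ?cd = "var_exp c + var_exp d"
  have "Poly_Mapping.lookup (Var c * Var d * \<alpha> j) ?cd = Poly_Mapping.lookup (\<alpha> j) 0" for j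
    by (subst lookup_mult_eq_single_pair[of _ _ _ ?cd 0]) (auto simp: Var_mult_Var)
  moreover have "Poly_Mapping.lookup (Var a * Var b * \<gamma> j) ?cd = 0" for j
  proof -
    have "?cd \<notin> Poly_Mapping.keys (Var a * Var b * \<gamma> j)"
      using keys_mult[of "Var a * Var b" "\<gamma> j"] var_exp_pair_ne_plus[OF assms(1,2)]
      by (auto simp: Var_mult_Var add.assoc)
    then show ?thesis
      by (simp add: in_keys_iff)
  qed
  moreover have "mdeg ?ab = 2"
    by (simp only: mdeg_add mdeg_var_exp one_add_one)
  then have "(\<Sum>j<B. Poly_Mapping.lookup (g j) ?ab * Poly_Mapping.lookup (\<alpha> j) 0)
      = Poly_Mapping.lookup (Var a * Var b) ?ab"
    unfolding rep lookup_sum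
    by (intro sum.cong refl) (simp add: lookup_mult_homogeneous[OF hom] mult.commute)
  ultimately show ?thesis
    by (simp add: lookup_minus Var_mult_Var)
qed

theorem edge_ideal_with_gap_has_no_linear_resolution:
  assumes "{a, b, c, d} \<subseteq> V" and gap: "is_gap G a b c d"
  shows "\<not> has_linear_resolution V (edge_ideal V G :: ('v, 'k::field) mpoly set)"
proof
  assume "has_linear_resolution V (edge_ideal V G :: ('v, 'k) mpoly set)"
  then obtain B and g :: "nat \<Rightarrow> ('v, 'k) mpoly" and B1 and M :: "nat \<Rightarrow> nat \<Rightarrow> ('v, 'k) mpoly" where
      hom: "\<And>j. j < B \<Longrightarrow> homogeneous 2 (g j)"
    and gen: "ideal_gen V {g j | j. j < B} = edge_ideal V G"
    and lin: "\<And>j l. j < B \<Longrightarrow> l < B1 \<Longrightarrow> homogeneous 1 (M j l)"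
    and col: "\<And>l. l < B1 \<Longrightarrow> (\<Sum>j<B. M j l * g j) = 0"
    and exact: "\<And>x. x \<in> free_mod V B \<Longrightarrow> (\<Sum>j<B. x j * g j) = 0
        \<Longrightarrow> \<exists>y. \<forall>j. x j = (\<Sum>l<B1. M j l * y l)"
    by (rule linear_resolution_first_syzygies) (rule that)
  define A C :: "('v, 'k) mpoly" where "A = Var a * Var b" and "C = Var c * Var d"
  define p where "p j = Poly_Mapping.lookup (g j) (var_exp a + var_exp b)" for j
  have supp: "edge_supported G (g j)" if "j < B" for j
  proof -
    have "g j \<in> ideal_gen V {g j | j. j < B}"
      using that by (intro generator_in_ideal_gen) blast
    then show ?thesis
      unfolding gen using hom[OF that] by (rule edge_supported_if_quadric_in_edge_ideal)
  qed
  have "A \<in> edge_ideal V G" "C \<in> edge_ideal V G"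
    unfolding edge_ideal_def A_def C_def using assms unfolding is_gap_def
    by (blast intro: generator_in_ideal_gen)+
  then have "A \<in> ideal_gen V {g j | j. j < B}" "C \<in> ideal_gen V {g j | j. j < B}"
    unfolding gen .
  then obtain \<alpha> \<gamma> where
    \<alpha>: "\<And>j. j < B \<Longrightarrow> \<alpha> j \<in> polys_in V" "A = (\<Sum>j<B. \<alpha> j * g j)" and
    \<gamma>: "\<And>j. j < B \<Longrightarrow> \<gamma> j \<in> polys_in V" "C = (\<Sum>j<B. \<gamma> j * g j)"
    by (elim ideal_gen_indexed_combination) (rule that)
  have "A \<in> polys_in V" "C \<in> polys_in V"
    using assms(1) by (auto simp: A_def C_def intro!: polys_in_mult polys_in_Var)
  define x where "x = (\<lambda>j. if j < B then C * \<alpha> j - A * \<gamma> j else 0)"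
  have "x \<in> free_mod V B" "(\<Sum>j<B. x j * g j) = 0"
    unfolding x_def using koszul_syzygy[OF \<open>A \<in> polys_in V\<close> \<open>C \<in> polys_in V\<close> \<alpha>(1) \<gamma>(1) \<alpha>(2) \<gamma>(2)] by simp_all
  then obtain y where y: "\<And>j. x j = (\<Sum>l<B1. M j l * y l)"
    using exact by blast
  have "(\<Sum>j<B. p j * Poly_Mapping.lookup (x j) (var_exp c + var_exp d))
      = (\<Sum>j<B. Poly_Mapping.lookup (g j) (var_exp a + var_exp b)
          * Poly_Mapping.lookup (C * \<alpha> j - A * \<gamma> j) (var_exp c + var_exp d))"
    by (rule sum.cong[OF refl]) (simp add: p_def x_def)
  also have "\<dots> = 1"
    unfolding A_def C_def
    by (rule koszul_syzygy_weighted_coeff) (use gap hom \<alpha>(2) in \<open>simp_all add: is_gap_def A_def\<close>)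
  finally have "(\<Sum>j<B. p j * Poly_Mapping.lookup (x j) (var_exp c + var_exp d)) = 1" .
  moreover have "(\<Sum>j<B. p j * Poly_Mapping.lookup (x j) (var_exp c + var_exp d)) = 0"
    unfolding y p_def
  proof (rule weighted_coeff_of_linear_image_eq_0[OF _ lin])
    show "c \<noteq> d"
      using gap by (simp add: is_gap_def)
    show "(\<Sum>j<B. Poly_Mapping.lookup (g j) (var_exp a + var_exp b) * Poly_Mapping.lookup (M j l) (var_exp w)) = 0"
      if "l < B1" "w \<in> {c, d}" for l w
      using gap that by (intro linear_syzygy_coeff_at_isolated_edge[OF _ _ _ _ _ lin supp col])
        (auto simp: is_gap_def)
  qed
  ultimately show False
    by simp
qed

section \<open>Shortest walks\<close>

lemma walk_iff_successively: "walk V E p \<longleftrightarrow> p \<noteq> [] \<and> set p \<subseteq> V \<and> successively E p"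
  unfolding walk_def successively_conv_nth by blast

lemma walk_rev:
  assumes "simple_graph V E" "walk V E p"
  shows "walk V E (rev p)"
proof -
  have "successively E p"
    using assms(2) by (simp add: walk_iff_successively)
  then have "successively (\<lambda>x y. E y x) p"
    by (rule successively_mono) (use assms(1) in \<open>auto simp: simple_graph_def\<close>)
  then show ?thesis
    using assms(2) by (simp add: walk_iff_successively)
qed

lemma walk_splice:
  assumes p: "walk V E p" and q: "walk V E q"
    and i: "i < length p" and j: "j < length p"
    and hd_q: "hd q = p ! i" and last_q: "last q = p ! j"
  shows "walk V E (take i p @ q @ drop (Suc j) p)"
    and "hd (take i p @ q @ drop (Suc j) p) = hd p"
    and "last (take i p @ q @ drop (Suc j) p) = last p"
proof -
  have "p \<noteq> []" "q \<noteq> []" and succ_p: "successively E p" and succ_q: "successively E q"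
    using p q by (auto simp: walk_iff_successively)
  have edge: "E (p ! k) (p ! Suc k)" if "Suc k < length p" for k
    using p that unfolding walk_def by blast
  have "successively E (take i p)" "successively E (drop (Suc j) p)"
    using succ_p append_take_drop_id[of i p] append_take_drop_id[of "Suc j" p]
    by (metis successively_append_iff)+
  moreover have "take i p = [] \<or> E (last (take i p)) (hd q)"
    using edge[of "i - 1"] i hd_q by (cases i) (auto simp: take_Suc_conv_app_nth)
  moreover have "drop (Suc j) p = [] \<or> E (last q) (hd (drop (Suc j) p))"
  proof (cases "Suc j < length p")
    case True
    then show ?thesis
      using edge[of j] last_q by (simp add: hd_drop_conv_nth)
  qed simp
  ultimately have "successively E (take i p @ q @ drop (Suc j) p)"
    using succ_q \<open>q \<noteq> []\<close> by (auto simp: successively_append_iff)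
  moreover have "set (take i p @ q @ drop (Suc j) p) \<subseteq> V"
    using p q set_take_subset[of i p] set_drop_subset[of "Suc j" p]
    by (auto simp: walk_iff_successively)
  ultimately show "walk V E (take i p @ q @ drop (Suc j) p)"
    using \<open>q \<noteq> []\<close> by (simp add: walk_iff_successively)
  show "hd (take i p @ q @ drop (Suc j) p) = hd p"
  proof (cases i)
    case 0
    then show ?thesis
      using \<open>p \<noteq> []\<close> \<open>q \<noteq> []\<close> hd_q by (simp add: hd_conv_nth[symmetric])
  next
    case (Suc k)
    then show ?thesis
      using \<open>p \<noteq> []\<close> by (cases p) auto
  qed
  show "last (take i p @ q @ drop (Suc j) p) = last p"
  proof (cases "Suc j < length p")
    case False
    then have "j = length p - 1"
      using j by simp
    then have "drop (Suc j) p = []" "last p = p ! j"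
      using \<open>p \<noteq> []\<close> by (simp_all add: last_conv_nth)
    then show ?thesis
      using \<open>q \<noteq> []\<close> last_q by simp
  qed simp
qed

lemma dist_le_length:
  assumes "walk V E p" "hd p = u" "last p = v"
  shows "dist V E u v \<le> length p - 1"
proof -
  have "length p = Suc (length p - 1)"
    using assms(1) by (simp add: walk_def)
  then show ?thesis
    unfolding dist_def using assms by (intro Least_le) blast
qed

lemma shortest_walk_exists:
  assumes "walk V E p" "hd p = u" "last p = v"
  obtains q where "walk V E q" "hd q = u" "last q = v" "length q = Suc (dist V E u v)"
proof -
  have "length p = Suc (length p - 1)"
    using assms(1) by (simp add: walk_def)
  then have "\<exists>n q. walk V E q \<and> hd q = u \<and> last q = v \<and> length q = Suc n"
    using assms by blast
  then have "\<exists>q. walk V E q \<and> hd q = u \<and> last q = v \<and> length q = Suc (dist V E u v)"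
    unfolding dist_def by (rule LeastI_ex)
  then show thesis
    using that by blast
qed

lemma dist_self: "u \<in> V \<Longrightarrow> dist V E u u = 0"
  using dist_le_length[of V E "[u]" u u] by (simp add: walk_def)

lemma dist_commute:
  assumes "simple_graph V E"
  shows "dist V E u v = dist V E v u"
proof -
  have rev: "\<exists>p. walk V E p \<and> hd p = v \<and> last p = u \<and> length p = n"
    if "walk V E p" "hd p = u" "last p = v" "length p = n" for p u v n
    using that walk_rev[OF assms, of p] by (metis hd_rev last_rev length_rev)
  then have "(\<exists>p. walk V E p \<and> hd p = u \<and> last p = v \<and> length p = n)
      \<longleftrightarrow> (\<exists>p. walk V E p \<and> hd p = v \<and> last p = u \<and> length p = n)" for n
    by blast
  then show ?thesis
    unfolding dist_def by simp
qed

lemma graph_square_commute: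
  "simple_graph V E \<Longrightarrow> graph_square V E x y \<longleftrightarrow> graph_square V E y x"
  by (auto simp: graph_square_def dist_commute)

lemma graph_square_if_edge:
  assumes "simple_graph V E" "E x y"
  shows "graph_square V E x y"
proof -
  have "x \<in> V" "y \<in> V" "x \<noteq> y"
    using assms unfolding simple_graph_def by blast+
  then have walk: "walk V E [x, y]"
    using assms(2) by (auto simp: walk_def nth_Cons split: nat.splits)
  then obtain q where q: "walk V E q" "hd q = x" "last q = y" "length q = Suc (dist V E x y)"
    by (rule shortest_walk_exists) simp_all
  have "dist V E x y \<noteq> 0"
  proof
    assume "dist V E x y = 0"
    then obtain z where "q = [z]"
      using q(4) by (auto simp: length_Suc_conv)
    then show False
      using q(2,3) \<open>x \<noteq> y\<close> by simp
  qed
  moreover have "dist V E x y \<le> 1"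
    using dist_le_length[OF walk] by simp
  ultimately show ?thesis
    using \<open>x \<in> V\<close> \<open>y \<in> V\<close> \<open>x \<noteq> y\<close> by (simp add: graph_square_def)
qed

lemma shortest_walk_dist_ge:
  assumes "connected_graph V E"
    and p: "walk V E p" "length p = Suc (dist V E (hd p) (last p))"
    and "i \<le> j" "j < length p"
  shows "j - i \<le> dist V E (p ! i) (p ! j)"
proof -
  have "p ! i \<in> V" "p ! j \<in> V"
    using p(1) assms(4,5) by (auto simp: walk_def)
  then obtain q0 where "walk V E q0" "hd q0 = p ! i" "last q0 = p ! j"
    using assms(1) unfolding connected_graph_def by blast
  then obtain q where q: "walk V E q" "hd q = p ! i" "last q = p ! j"
    "length q = Suc (dist V E (p ! i) (p ! j))"
    by (rule shortest_walk_exists)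
  let ?r = "take i p @ q @ drop (Suc j) p"
  have "walk V E ?r" "hd ?r = hd p" "last ?r = last p"
    using walk_splice[OF p(1) q(1) _ _ q(2,3)] assms(4,5) by simp_all
  then have "dist V E (hd p) (last p) \<le> length ?r - 1"
    by (rule dist_le_length)
  then show ?thesis
    using p(2) q(4) assms(4,5) by simp
qed

lemma diam_attained:
  assumes "finite V" "V \<noteq> {}"
  obtains u v where "u \<in> V" "v \<in> V" "diam V E = dist V E u v"
proof -
  have "{dist V E u v | u v. u \<in> V \<and> v \<in> V} = (\<lambda>(u, v). dist V E u v) ` (V \<times> V)"
    by auto
  then have "diam V E \<in> {dist V E u v | u v. u \<in> V \<and> v \<in> V}"
    unfolding diam_def using assms by (intro Max_in) auto
  then show thesis
    using that by blast
qed

section \<open>Gaps in the square of a graph of large diameter\<close>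

lemma square_has_gap_if_diam_gt_4:
  assumes "finite V" "V \<noteq> {}" "simple_graph V E" "connected_graph V E" "4 < diam V E"
  obtains a b c d where "{a, b, c, d} \<subseteq> V" "is_gap (graph_square V E) a b c d"
proof -
  obtain u v where "u \<in> V" "v \<in> V" and diam: "diam V E = dist V E u v"
    using assms(1,2) by (rule diam_attained)
  then obtain p0 where "walk V E p0" "hd p0 = u" "last p0 = v"
    using assms(4) unfolding connected_graph_def by blast
  then obtain p where p: "walk V E p" "hd p = u" "last p = v" "length p = Suc (dist V E u v)"
    by (rule shortest_walk_exists)
  define n where "n = dist V E u v"
  have "5 \<le> n"
    using assms(5) diam n_def by simp
  have in_V: "p ! k \<in> V" if "k \<le> n" for k
    using p(1,4) that n_def by (auto simp: walk_def)
  have edge: "graph_square V E (p ! k) (p ! Suc k)" if "Suc k \<le> n" for k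
    using p(1,4) that n_def by (intro graph_square_if_edge[OF assms(3)]) (auto simp: walk_def)
  have far: "p ! i \<noteq> p ! j \<and> \<not> graph_square V E (p ! i) (p ! j) \<and> \<not> graph_square V E (p ! j) (p ! i)"
    if "i \<le> 1" "n - 1 \<le> j" "j \<le> n" for i j
  proof -
    have "j - i \<le> dist V E (p ! i) (p ! j)"
      using shortest_walk_dist_ge[OF assms(4) p(1)] p that n_def \<open>5 \<le> n\<close> by simp
    then have "3 \<le> dist V E (p ! i) (p ! j)"
      using that \<open>5 \<le> n\<close> by linarith
    then show ?thesis
      using dist_self[OF in_V, of i E] graph_square_commute[OF assms(3)] that \<open>5 \<le> n\<close>
      by (auto simp: graph_square_def)
  qed
  show thesis
  proof (rule that)
    show "{p ! 0, p ! 1, p ! (n - 1), p ! n} \<subseteq> V"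
      using in_V \<open>5 \<le> n\<close> by simp
    have "p ! 0 \<noteq> p ! 1" "p ! (n - 1) \<noteq> p ! n"
      using edge[of 0] edge[of "n - 1"] \<open>5 \<le> n\<close> by (simp_all add: graph_square_def)
    then show "is_gap (graph_square V E) (p ! 0) (p ! 1) (p ! (n - 1)) (p ! n)"
      using edge[of 0] edge[of "n - 1"] far[of 0 "n - 1"] far[of 0 n] far[of 1 "n - 1"] far[of 1 n] \<open>5 \<le> n\<close>
      by (simp add: is_gap_def)
  qed
qed

theorem lemma3p9:
  fixes V :: "'v set" and E :: "'v \<Rightarrow> 'v \<Rightarrow> bool"
  assumes "tree V E"
    and "has_linear_resolution V (edge_ideal V (graph_square V E) :: ('v, 'k::field) mpoly set)"
  shows "diam V E \<le> 4"
proof (rule ccontr)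
  assume "\<not> diam V E \<le> 4"
  then have "4 < diam V E"
    by simp
  moreover have "finite V" "V \<noteq> {}" "simple_graph V E" "connected_graph V E"
    using assms(1) by (simp_all add: tree_def)
  ultimately obtain a b c d where gap: "{a, b, c, d} \<subseteq> V" "is_gap (graph_square V E) a b c d"
    using square_has_gap_if_diam_gt_4 by blast
  have "\<not> has_linear_resolution V (edge_ideal V (graph_square V E) :: ('v, 'k) mpoly set)"
    using gap by (rule edge_ideal_with_gap_has_no_linear_resolution)
  then show False
    using assms(2) by contradiction
qed

end
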